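(* Let $c_0>0$, $\alpha_0>0$, and let $\gamma>0$ be a real number that is not an odd integer. Let $\tilde\alpha_0=\alpha_0/\cos(\frac{\pi}{2}\gamma)$ and $\alpha^*_{pl}(\omega)=\tilde\alpha_0(-i\omega)^\gamma$ for $\omega\in\mathbb{R}$. Then the function $K(\vec x,t)=\frac{1}{\sqrt{2\pi}}\mathcal{F}^{-1}\{e^{-\alpha^*_{pl}(\cdot)|\vec x|}\}(t)$ is causal (i.e. $t\mapsto K(\vec x,t)$ vanishes for $t<0$ for every $\vec x\in\mathbb{R}^3$) if and only if $\gamma\in(0,1)$.
   Context: Fourier convention: $\mathcal{F}^{-1}\{\hat f\}(t)=\frac{1}{\sqrt{2\pi}}\int_{\mathbb{R}}e^{-i\omega t}\hat f(\omega)\,d\omega$ (tempered distributions). Complex powers are principal: for $w=re^{i\phi}$, $\phi\in(-\pi,\pi)$, $w^\gamma=e^{\gamma(\log r+i\phi)}$; thus $\alpha^*_{pl}(\omega)=\tilde\alpha_0|\omega|^\gamma(\cos(\frac{\pi}{2}\gamma)-i\,\mathrm{sgn}(\omega)\sin(\frac{\pi}{2}\gamma))$. *)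

theory Defs
  imports "HOL-Analysis.Analysis"
begin

definition alpha_tilde :: "real \<Rightarrow> real \<Rightarrow> real" where
  "alpha_tilde \<alpha>0 \<gamma> = \<alpha>0 / cos (pi / 2 * \<gamma>)"

text \<open>Power-law attenuation alpha*_pl(omega) = tilde alpha_0 (-i omega)^gamma, principal power
  (Isabelle's complex powr uses the principal branch of Ln; 0 powr z = 0).\<close>
definition alpha_pl :: "real \<Rightarrow> real \<Rightarrow> real \<Rightarrow> complex" where
  "alpha_pl \<alpha>0 \<gamma> \<omega> =
     complex_of_real (alpha_tilde \<alpha>0 \<gamma>) * ((- \<i> * complex_of_real \<omega>) powr complex_of_real \<gamma>)"

definition inv_fourier :: "(real \<Rightarrow> complex) \<Rightarrow> real \<Rightarrow> complex" where
  "inv_fourier f t = complex_of_real (1 / sqrt (2 * pi)) *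
     (LINT \<omega>|lborel. exp (- \<i> * complex_of_real (\<omega> * t)) * f \<omega>)"

definition kernel_K :: "real \<Rightarrow> real \<Rightarrow> real^3 \<Rightarrow> real \<Rightarrow> complex" where
  "kernel_K \<alpha>0 \<gamma> x t = complex_of_real (1 / sqrt (2 * pi)) *
     inv_fourier (\<lambda>\<omega>. exp (- alpha_pl \<alpha>0 \<gamma> \<omega> * complex_of_real (norm x))) t"

end

theory Submission
  imports Defs "HOL-Complex_Analysis.Complex_Analysis" "HOL-Probability.Sinc_Integral"
    "HOL-Real_Asymp.Real_Asymp"
begin

text \<open>
  Write r = |x| > 0. For 0 < \<gamma> < 1 and t < 0 the integrand exp(-i \<omega> t) exp(-\<alpha>*(\<omega>) r) is the
  restriction to the real axis of a function that is holomorphic in the upper half-plane, continuous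
  up to its boundary and bounded there by exp(-\<alpha>0 r |z|^\<gamma>): the phase factor has modulus at most 1,
  and the argument of (-i z)^\<gamma> stays within \<gamma> \<pi>/2 < \<pi>/2. Rotating the half-line [0,\<infinity>) through the
  upper half-plane onto (-\<infinity>,0] therefore shows that the integrals over the two half-lines cancel.

  For \<gamma> > 1 the kernel is continuous in t, so causality would force K(x,0) = 0, that is
  2 Re \<integral>[0,\<infinity>) exp(-b \<omega>^\<gamma>) d\<omega> = 0 with Re b = \<alpha>0 r > 0. Rotating this half-line by -Arg b / \<gamma>, an
  angle of modulus less than \<pi>/2 since \<gamma> > 1, turns the integrand into exp(-|b| \<rho>^\<gamma>), so the real
  part equals cos(Arg b / \<gamma>) times a positive number.
\<close>

lemma has_contour_integral_linepath_ray:
  fixes h :: "complex \<Rightarrow> complex"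
  assumes R: "R > 0" and I: "((\<lambda>\<rho>. h (of_real \<rho> * u)) has_integral I) {0..R}"
  shows "(h has_contour_integral (u * I)) (linepath 0 (of_real R * u))"
proof -
  have "(\<lambda>x. x / R) ` {0..R} = {0..1}"
    using R by (auto simp: image_iff field_simps intro!: bexI[of _ "R * _"])
  then have "((\<lambda>x. h (of_real (R * x) * u)) has_integral (1 / R) *\<^sub>R I) {0..1}"
    using has_integral_stretch_real[OF I, of R] R by simp
  from has_integral_mult_left[OF this, of "of_real R * u"]
  show ?thesis
    unfolding has_contour_integral_linepath using R
    by (simp add: linepath_def scaleR_conv_of_real field_simps)
qed

lemma contour_integral_wedge:
  fixes h :: "complex \<Rightarrow> complex"
  assumes S: "convex S"
    and sector: "\<And>\<rho> \<theta>. 0 \<le> \<rho> \<Longrightarrow> \<theta> \<in> closed_segment 0 \<psi> \<Longrightarrow> of_real \<rho> * cis \<theta> \<in> S"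
    and cont: "continuous_on S h"
    and holo: "\<And>z. z \<in> S \<Longrightarrow> z \<noteq> 0 \<Longrightarrow> h field_differentiable at z"
    and R: "R > 0"
  shows "integral {0..R} (\<lambda>\<rho>. h (of_real \<rho>)) - cis \<psi> * integral {0..R} (\<lambda>\<rho>. h (of_real \<rho> * cis \<psi>))
           + contour_integral (part_circlepath 0 R 0 \<psi>) h = 0"
proof -
  have ray: "(h has_contour_integral (cis \<theta> * integral {0..R} (\<lambda>\<rho>. h (of_real \<rho> * cis \<theta>))))
               (linepath 0 (of_real R * cis \<theta>))" if \<theta>: "\<theta> \<in> {0, \<psi>}" for \<theta>
  proof (rule has_contour_integral_linepath_ray[OF R])
    have "continuous_on {0..R} (\<lambda>\<rho>. h (of_real \<rho> * cis \<theta>))"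
      using \<theta> by (intro continuous_on_compose2[OF cont] continuous_intros) (auto intro!: sector)
    then show "((\<lambda>\<rho>. h (of_real \<rho> * cis \<theta>)) has_integral integral {0..R} (\<lambda>\<rho>. h (of_real \<rho> * cis \<theta>))) {0..R}"
      by (intro integrable_integral integrable_continuous_real)
  qed
  have arc_S: "path_image (part_circlepath 0 R 0 \<psi>) \<subseteq> S"
    unfolding path_image_part_circlepath' using sector R by auto
  have arc: "(h has_contour_integral contour_integral (part_circlepath 0 R 0 \<psi>) h) (part_circlepath 0 R 0 \<psi>)"
    by (intro has_contour_integral_integral contour_integrable_continuous_part_circlepath
        continuous_on_subset[OF cont arc_S])
  have arc_end: "pathfinish (part_circlepath 0 R 0 \<psi>) = of_real R * cis \<psi>"
    by (simp add: cis_conv_exp mult.commute)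
  define g where "g = linepath 0 (of_real R) +++ part_circlepath 0 R 0 \<psi> +++ linepath (of_real R * cis \<psi>) 0"
  have "(h has_contour_integral integral {0..R} (\<lambda>\<rho>. h (of_real \<rho>)) +
      (contour_integral (part_circlepath 0 R 0 \<psi>) h + - cis \<psi> * integral {0..R} (\<lambda>\<rho>. h (of_real \<rho> * cis \<psi>)))) g"
    unfolding g_def using ray[of 0] has_contour_integral_reversepath[OF valid_path_linepath ray[of \<psi>]]
    by (intro has_contour_integral_join arc valid_path_join) (simp_all add: arc_end cis_conv_exp)
  moreover have "(h has_contour_integral 0) g"
  proof (rule Cauchy_theorem_convex[OF cont S, where K="{0}"])
    have "0 \<in> S" "of_real R \<in> S" "of_real R * cis \<psi> \<in> S"
      using sector[of 0 0] sector[of R 0] sector[of R \<psi>] R by auto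
    then show "path_image g \<subseteq> S"
      unfolding g_def using arc_S closed_segment_subset[OF _ _ S]
      by (simp add: path_image_join arc_end cis_conv_exp)
    show "valid_path g" "pathfinish g = pathstart g"
      unfolding g_def by (simp_all add: arc_end cis_conv_exp)
    show "h field_differentiable at z" if "z \<in> interior S - {0}" for z
      using that holo interior_subset by blast
  qed simp
  ultimately show ?thesis
    by (auto dest: has_contour_integral_unique simp: algebra_simps)
qed

lemma contour_integral_part_circlepath_tendsto_0:
  fixes h :: "complex \<Rightarrow> complex"
  assumes cont: "continuous_on S h"
    and sector: "\<And>\<rho> \<theta>. 0 \<le> \<rho> \<Longrightarrow> \<theta> \<in> closed_segment 0 \<psi> \<Longrightarrow> of_real \<rho> * cis \<theta> \<in> S"
    and bound: "\<And>\<rho> \<theta>. 0 \<le> \<rho> \<Longrightarrow> \<theta> \<in> closed_segment 0 \<psi> \<Longrightarrow> norm (h (of_real \<rho> * cis \<theta>)) \<le> B \<rho>"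
    and B: "((\<lambda>R. R * B R) \<longlongrightarrow> 0) at_top"
  shows "((\<lambda>R. contour_integral (part_circlepath 0 R 0 \<psi>) h) \<longlongrightarrow> 0) at_top"
proof (rule Lim_null_comparison)
  show "\<forall>\<^sub>F R in at_top. norm (contour_integral (part_circlepath 0 R 0 \<psi>) h) \<le> R * B R * \<bar>\<psi>\<bar>"
  proof (rule eventually_mono[OF eventually_gt_at_top[of 0]])
    fix R :: real assume R: "R > 0"
    have arc_S: "path_image (part_circlepath 0 R 0 \<psi>) \<subseteq> S"
      unfolding path_image_part_circlepath' using sector R by auto
    have "norm (contour_integral (part_circlepath 0 R 0 \<psi>) h) \<le> B R * R * \<bar>\<psi> - 0\<bar>"
    proof (rule contour_integral_bound_part_circlepath)
      show "h contour_integrable_on part_circlepath 0 R 0 \<psi>"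
        by (intro contour_integrable_continuous_part_circlepath continuous_on_subset[OF cont arc_S])
      show "0 \<le> B R"
        by (rule order_trans[OF norm_ge_zero bound[of R 0]]) (use R in auto)
      show "norm (h z) \<le> B R" if "z \<in> path_image (part_circlepath 0 R 0 \<psi>)" for z
        using that R bound unfolding path_image_part_circlepath' by auto
    qed (use R in auto)
    then show "norm (contour_integral (part_circlepath 0 R 0 \<psi>) h) \<le> R * B R * \<bar>\<psi>\<bar>"
      by (simp add: mult_ac)
  qed
  show "((\<lambda>R. R * B R * \<bar>\<psi>\<bar>) \<longlongrightarrow> 0) at_top"
    using tendsto_mult_right_zero[OF B, of "\<bar>\<psi>\<bar>"] by (simp add: mult_ac)
qed

lemma tendsto_integral_atLeastAtMost_at_top:
  fixes f :: "real \<Rightarrow> complex"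
  assumes f: "set_integrable lborel {0..} f"
  shows "((\<lambda>R. integral {0..R} f) \<longlongrightarrow> (LBINT x:{0..}. f x)) at_top"
proof -
  have "((\<lambda>R. LBINT x:{0..R}. f x) \<longlongrightarrow> (LBINT x:{0..}. f x)) at_top"
    by (rule tendsto_set_lebesgue_integral_at_top[OF _ f]) auto
  moreover have "(LBINT x:{0..R}. f x) = integral {0..R} f" for R
    by (rule set_borel_integral_eq_integral(2), rule set_integrable_subset[OF f]) auto
  ultimately show ?thesis
    by simp
qed

lemma set_integral_half_line_rotation:
  fixes h :: "complex \<Rightarrow> complex"
  assumes S: "convex S"
    and sector: "\<And>\<rho> \<theta>. 0 \<le> \<rho> \<Longrightarrow> \<theta> \<in> closed_segment 0 \<psi> \<Longrightarrow> of_real \<rho> * cis \<theta> \<in> S"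
    and cont: "continuous_on S h"
    and holo: "\<And>z. z \<in> S \<Longrightarrow> z \<noteq> 0 \<Longrightarrow> h field_differentiable at z"
    and bound: "\<And>\<rho> \<theta>. 0 \<le> \<rho> \<Longrightarrow> \<theta> \<in> closed_segment 0 \<psi> \<Longrightarrow> norm (h (of_real \<rho> * cis \<theta>)) \<le> B \<rho>"
    and B: "((\<lambda>R. R * B R) \<longlongrightarrow> 0) at_top"
    and B_integrable: "set_integrable lborel {0..} B"
  shows "(LBINT \<rho>:{0..}. h (of_real \<rho>)) = cis \<psi> * (LBINT \<rho>:{0..}. h (of_real \<rho> * cis \<psi>))"
proof -
  have ray_integrable: "set_integrable lborel {0..} (\<lambda>\<rho>. h (of_real \<rho> * cis \<theta>))" if \<theta>: "\<theta> \<in> {0, \<psi>}" for \<theta>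
    unfolding set_integrable_def
  proof (rule Bochner_Integration.integrable_bound[OF B_integrable[unfolded set_integrable_def]])
    have "continuous_on {0..} (\<lambda>\<rho>. h (of_real \<rho> * cis \<theta>))"
      using \<theta> by (intro continuous_on_compose2[OF cont] continuous_intros) (auto intro!: sector)
    then show "(\<lambda>\<rho>. indicator {0..} \<rho> *\<^sub>R h (of_real \<rho> * cis \<theta>)) \<in> borel_measurable lborel"
      unfolding measurable_lborel2 by (intro borel_measurable_continuous_on_indicator) auto
    show "AE \<rho> in lborel. norm (indicator {0..} \<rho> *\<^sub>R h (of_real \<rho> * cis \<theta>)) \<le> norm (indicator {0..} \<rho> *\<^sub>R B \<rho>)"
      using \<theta> bound by (intro AE_I2) (auto simp: indicator_def intro: order_trans[OF _ abs_ge_self])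
  qed
  have int0: "set_integrable lborel {0..} (\<lambda>\<rho>. h (of_real \<rho>))"
    using ray_integrable[of 0] by simp
  have int\<psi>: "set_integrable lborel {0..} (\<lambda>\<rho>. h (of_real \<rho> * cis \<psi>))"
    using ray_integrable[of \<psi>] by simp
  have "((\<lambda>R. integral {0..R} (\<lambda>\<rho>. h (of_real \<rho>)) - cis \<psi> * integral {0..R} (\<lambda>\<rho>. h (of_real \<rho> * cis \<psi>))
           + contour_integral (part_circlepath 0 R 0 \<psi>) h) \<longlongrightarrow>
        (LBINT \<rho>:{0..}. h (of_real \<rho>)) - cis \<psi> * (LBINT \<rho>:{0..}. h (of_real \<rho> * cis \<psi>)) + 0) at_top"
    by (intro tendsto_intros tendsto_integral_atLeastAtMost_at_top int0 int\<psi>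
        contour_integral_part_circlepath_tendsto_0[OF cont sector bound B])
  moreover have "((\<lambda>R. integral {0..R} (\<lambda>\<rho>. h (of_real \<rho>)) - cis \<psi> * integral {0..R} (\<lambda>\<rho>. h (of_real \<rho> * cis \<psi>))
           + contour_integral (part_circlepath 0 R 0 \<psi>) h) \<longlongrightarrow> 0) at_top"
    by (rule tendsto_eventually, use eventually_gt_at_top[of 0] in eventually_elim)
       (rule contour_integral_wedge[OF S sector cont holo])
  ultimately have "(LBINT \<rho>:{0..}. h (of_real \<rho>)) - cis \<psi> * (LBINT \<rho>:{0..}. h (of_real \<rho> * cis \<psi>)) + 0 = 0"
    by (rule tendsto_unique[OF trivial_limit_at_top_linorder])
  then show ?thesis by simp
qed

lemma bound_inverse_1_plus_square:
  fixes f :: "real \<Rightarrow> real"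
  assumes cont: "continuous_on {0..} f" and lim: "((\<lambda>x. (1 + x\<^sup>2) * f x) \<longlongrightarrow> 0) at_top"
  obtains K where "\<And>x. x \<ge> 0 \<Longrightarrow> \<bar>f x\<bar> \<le> K * inverse (1 + x\<^sup>2)"
proof -
  from lim have "\<forall>\<^sub>F x in at_top. \<bar>(1 + x\<^sup>2) * f x\<bar> < 1"
    by (rule order_tendstoD(2)[OF tendsto_rabs_zero]) simp
  then obtain X where X: "\<And>x. x \<ge> X \<Longrightarrow> \<bar>(1 + x\<^sup>2) * f x\<bar> < 1"
    by (auto simp: eventually_at_top_linorder)
  have "compact ((\<lambda>x. (1 + x\<^sup>2) * f x) ` {0..max 0 X})"
    by (intro compact_continuous_image continuous_intros continuous_on_subset[OF cont]) auto
  then obtain M where M: "\<And>y. y \<in> (\<lambda>x. (1 + x\<^sup>2) * f x) ` {0..max 0 X} \<Longrightarrow> norm y \<le> M"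
    using compact_imp_bounded bounded_iff by metis
  have "\<bar>f x\<bar> \<le> max 1 M * inverse (1 + x\<^sup>2)" if "x \<ge> 0" for x
  proof -
    have "\<bar>(1 + x\<^sup>2) * f x\<bar> \<le> max 1 M"
      using X[of x] M[of "(1 + x\<^sup>2) * f x"] that by (cases "x \<ge> X") force+
    moreover have "1 + x\<^sup>2 > 0" by (simp add: add_pos_nonneg)
    ultimately show ?thesis by (simp add: abs_mult field_simps)
  qed
  then show ?thesis by (rule that)
qed

lemma integrable_exp_neg_abs_powr:
  fixes c g :: real
  assumes "c > 0" "g > 0"
  shows "integrable lborel (\<lambda>x. exp (- c * \<bar>x\<bar> powr g))"
proof -
  have "continuous_on {0..} (\<lambda>x. exp (- c * x powr g))"
    using assms by (intro continuous_intros continuous_on_powr') auto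
  moreover have "((\<lambda>x. (1 + x\<^sup>2) * exp (- c * x powr g)) \<longlongrightarrow> 0) at_top"
    using assms by real_asymp
  ultimately obtain K where K: "\<And>x. x \<ge> 0 \<Longrightarrow> \<bar>exp (- c * x powr g)\<bar> \<le> K * inverse (1 + x\<^sup>2)"
    by (rule bound_inverse_1_plus_square) blast
  have "integrable lborel (\<lambda>x. K * inverse (1 + x\<^sup>2))"
    using integrable_inverse_1_plus_square by (simp add: set_integrable_def einterval_def)
  then show ?thesis
  proof (rule Bochner_Integration.integrable_bound)
    show "(\<lambda>x. exp (- c * \<bar>x\<bar> powr g)) \<in> borel_measurable lborel"
      unfolding measurable_lborel2 using assms
      by (intro borel_measurable_continuous_onI continuous_intros continuous_on_powr') auto
    show "AE x in lborel. norm (exp (- c * \<bar>x\<bar> powr g)) \<le> norm (K * inverse (1 + x\<^sup>2))"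
      using K[of "\<bar>x\<bar>" for x] by (auto intro: order_trans[OF _ abs_ge_self])
  qed
qed

lemma set_integrable_exp_neg_powr:
  fixes c g :: real
  assumes "c > 0" "g > 0"
  shows "set_integrable lborel {0..} (\<lambda>x. exp (- c * x powr g))"
proof -
  have "set_integrable lborel {0..} (\<lambda>x. exp (- c * \<bar>x\<bar> powr g))"
    unfolding set_integrable_def
    by (rule integrable_mult_indicator[OF _ integrable_exp_neg_abs_powr[OF assms]]) simp
  then show ?thesis
    by (rule set_integrable_cong[THEN iffD1, rotated -1]) auto
qed

lemma set_integral_exp_neg_powr_pos:
  fixes c g :: real
  assumes "c > 0" "g > 0"
  shows "(LBINT x:{0..}. exp (- c * x powr g)) > 0"
proof -
  note int = set_integrable_exp_neg_powr[OF assms]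
  have "exp (- c) = (LINT x|lborel. indicator {0..1::real} x * exp (- c))"
    by simp
  also have "\<dots> \<le> (LINT x|lborel. indicator {0..} x *\<^sub>R exp (- c * x powr g))"
  proof (rule integral_mono)
    show "indicator {0..1} x * exp (- c) \<le> indicator {0..} x *\<^sub>R exp (- c * x powr g)" for x :: real
      using assms powr_le1[of g x] by (auto simp: indicator_def mult_le_cancel_left1)
  qed (use int in \<open>auto simp: set_integrable_def\<close>)
  finally show ?thesis
    unfolding set_lebesgue_integral_def using exp_gt_zero[of "- c"] by linarith
qed

lemma lborel_integral_split_at_0:
  fixes F :: "real \<Rightarrow> complex"
  assumes int: "integrable lborel F"
  shows "integral\<^sup>L lborel F = (LBINT x:{0..}. F x) + (LBINT x:{0..}. F (- x))"
proof -
  have F[measurable]: "F \<in> borel_measurable borel" using int by auto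
  have "{0..} \<union> {..<0} = (UNIV :: real set)"
    by auto
  then have "integral\<^sup>L lborel F = (LBINT x:{0..} \<union> {..<0}. F x)"
    by (simp add: set_lebesgue_integral_def)
  also have "\<dots> = (LBINT x:{0..}. F x) + (LBINT x:{..<0}. F x)"
    by (rule set_integral_Un) (auto simp: set_integrable_def intro!: integrable_mult_indicator int)
  also have "(LBINT x:{..<0}. F x) = (LBINT x:{0<..}. F (- x))"
    by (subst set_integral_reflect) (simp add: lessThan_def greaterThan_def)
  also have "\<dots> = (LBINT x:{0..}. F (- x))"
  proof (rule set_integral_cong_set)
    show "AE x in lborel. ((x::real) \<in> {0..}) = (x \<in> {0<..})"
      using AE_lborel_singleton[of "0::real"] by (rule eventually_mono) auto
  qed (simp_all add: set_borel_measurable_def)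
  finally show ?thesis .
qed

lemma powr_of_real_mult_cis:
  fixes \<rho> \<phi> g :: real
  assumes "\<rho> > 0" "- pi < \<phi>" "\<phi> \<le> pi"
  shows "(of_real \<rho> * cis \<phi>) powr of_real g = of_real (\<rho> powr g) * cis (g * \<phi>)"
proof -
  have "Ln (of_real \<rho> * cis \<phi>) = of_real (ln \<rho>) + \<i> * of_real \<phi>"
    using Ln_rcis[of \<rho> \<phi>] assms by (simp add: rcis_def complex_eq_iff)
  then show ?thesis
    using assms by (simp add: powr_def exp_add cis_conv_exp algebra_simps flip: exp_of_real of_real_mult)
qed

lemma norm_exp_neg_powr_sector_le:
  fixes b :: complex and \<gamma> \<rho> \<theta> :: real
  assumes b: "Re b > 0" and \<gamma>: "\<gamma> \<ge> 1" and \<rho>: "\<rho> \<ge> 0"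
    and \<theta>: "\<theta> \<in> closed_segment 0 (- Arg b / \<gamma>)"
  shows "norm (exp (- (b * (of_real \<rho> * cis \<theta>) powr of_real \<gamma>))) \<le> exp (- Re b * \<rho> powr \<gamma>)"
proof (cases "\<rho> = 0")
  case False
  define A where "A = Arg b"
  have A: "\<bar>A\<bar> < pi / 2"
    using Arg_Re_pos[of b] b by (simp add: A_def)
  have b_polar: "b = of_real (norm b) * cis A"
    using rcis_cmod_Arg[of b] by (simp add: rcis_def A_def)
  obtain u where u: "0 \<le> u" "u \<le> 1" and \<theta>_eq: "\<theta> = u * (- A / \<gamma>)"
    using \<theta> by (auto simp: closed_segment_def A_def)
  have "A + \<gamma> * \<theta> = (1 - u) * A"
    using \<gamma> by (simp add: \<theta>_eq field_simps)
  then have "\<bar>A + \<gamma> * \<theta>\<bar> = (1 - u) * \<bar>A\<bar>" "\<bar>\<theta>\<bar> = u * (\<bar>A\<bar> / \<gamma>)"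
    using u \<gamma> by (simp_all add: \<theta>_eq abs_mult abs_divide)
  moreover have "\<bar>A\<bar> / \<gamma> \<le> \<bar>A\<bar>"
    using \<gamma> by (simp add: divide_le_eq mult_le_cancel_left1)
  moreover have "u * (\<bar>A\<bar> / \<gamma>) \<le> \<bar>A\<bar> / \<gamma>"
    using u \<gamma> by (intro mult_left_le_one_le) auto
  ultimately have \<gamma>\<theta>: "\<bar>A + \<gamma> * \<theta>\<bar> \<le> \<bar>A\<bar>" "\<bar>\<theta>\<bar> \<le> \<bar>A\<bar>"
    using u by (auto simp: mult_left_le_one_le)
  have "(of_real \<rho> * cis \<theta>) powr of_real \<gamma> = of_real (\<rho> powr \<gamma>) * cis (\<gamma> * \<theta>)"
    by (rule powr_of_real_mult_cis) (use False \<rho> A \<gamma>\<theta> in linarith)+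
  then have "norm (exp (- (b * (of_real \<rho> * cis \<theta>) powr of_real \<gamma>)))
      = exp (- (norm b * cos (A + \<gamma> * \<theta>)) * \<rho> powr \<gamma>)"
    by (subst b_polar) (simp add: cos_add algebra_simps)
  also have "\<dots> \<le> exp (- (norm b * cos A) * \<rho> powr \<gamma>)"
  proof -
    have "cos \<bar>A\<bar> \<le> cos \<bar>A + \<gamma> * \<theta>\<bar>"
      using A \<gamma>\<theta> by (intro cos_monotone_0_pi_le) auto
    then show ?thesis
      by (simp add: mult_left_mono mult_right_mono)
  qed
  also have "norm b * cos A = Re b"
    by (subst (2) b_polar) simp
  finally show ?thesis .
qed simp

lemma abs_Arg_div_less_pi_half:
  fixes b :: complex and \<gamma> :: real
  assumes b: "Re b > 0" and \<gamma>: "\<gamma> \<ge> 1"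
  shows "\<bar>Arg b / \<gamma>\<bar> < pi / 2"
proof -
  have "\<bar>Arg b / \<gamma>\<bar> \<le> \<bar>Arg b\<bar>"
    using \<gamma> by (simp add: abs_divide divide_le_eq mult_le_cancel_left1)
  moreover have "\<bar>Arg b\<bar> < pi / 2"
    using Arg_Re_pos[of b] b by simp
  ultimately show ?thesis
    by linarith
qed

lemma mult_powr_cis_neg_Arg_div:
  fixes b :: complex and \<gamma> x :: real
  assumes b: "Re b > 0" and \<gamma>: "\<gamma> \<ge> 1" and x: "x \<ge> 0"
  shows "b * (of_real x * cis (- Arg b / \<gamma>)) powr of_real \<gamma> = of_real (norm b * x powr \<gamma>)"
proof (cases "x = 0")
  case False
  have "Arg b / \<gamma> < pi / 2" "- (Arg b / \<gamma>) < pi / 2"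
    using abs_Arg_div_less_pi_half[OF b \<gamma>] by (simp_all only: abs_less_iff)
  then have "- pi < - Arg b / \<gamma>" "- Arg b / \<gamma> \<le> pi"
    unfolding minus_divide_left by linarith+
  then have "(of_real x * cis (- Arg b / \<gamma>)) powr of_real \<gamma> = of_real (x powr \<gamma>) * cis (\<gamma> * (- Arg b / \<gamma>))"
    using x False by (intro powr_of_real_mult_cis) auto
  also have "\<gamma> * (- Arg b / \<gamma>) = - Arg b"
    using \<gamma> by simp
  moreover have "b = of_real (norm b) * cis (Arg b)"
    using rcis_cmod_Arg[of b] by (simp add: rcis_def)
  then have "b * cis (- Arg b) = of_real (norm b)"
    by (metis cis_mult cis_zero mult.assoc mult.right_neutral add.right_inverse)
  ultimately show ?thesis
    by (metis mult.left_commute mult.commute of_real_mult)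
qed simp

lemma set_integral_exp_neg_mult_powr:
  fixes b :: complex and \<gamma> :: real
  assumes b: "Re b > 0" and \<gamma>: "\<gamma> \<ge> 1"
  shows "(LBINT x:{0..}. exp (- (b * of_real (x powr \<gamma>))))
           = cis (- Arg b / \<gamma>) * of_real (LBINT x:{0..}. exp (- norm b * x powr \<gamma>))"
proof -
  define \<psi> where "\<psi> = - Arg b / \<gamma>"
  define h where "h z = exp (- (b * z powr of_real \<gamma>))" for z
  have \<psi>: "\<bar>\<psi>\<bar> < pi / 2"
    using abs_Arg_div_less_pi_half[OF b \<gamma>] by (simp add: \<psi>_def)
  have h_real: "h (of_real x) = exp (- (b * of_real (x powr \<gamma>)))" if "x \<ge> 0" for x
    using that by (simp add: h_def powr_of_real)
  have h_rotated: "h (of_real x * cis \<psi>) = of_real (exp (- norm b * x powr \<gamma>))" if "x \<ge> 0" for x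
    using mult_powr_cis_neg_Arg_div[OF b \<gamma> that] by (simp add: h_def \<psi>_def flip: exp_of_real)
  have rotation: "(LBINT x:{0..}. h (of_real x)) = cis \<psi> * (LBINT x:{0..}. h (of_real x * cis \<psi>))"
  proof (rule set_integral_half_line_rotation[where S="{z. Re z \<ge> 0}" and B="\<lambda>\<rho>. exp (- Re b * \<rho> powr \<gamma>)"])
    show "convex {z. Re z \<ge> 0}"
      by (rule convex_halfspace_Re_ge)
    show "of_real \<rho> * cis \<theta> \<in> {z. 0 \<le> Re z}" if "0 \<le> \<rho>" "\<theta> \<in> closed_segment 0 \<psi>" for \<rho> \<theta>
    proof -
      have "\<bar>\<theta>\<bar> \<le> \<bar>\<psi>\<bar>"
        using that(2) by (auto simp: closed_segment_eq_real_ivl split: if_splits)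
      then show ?thesis
        using that(1) \<psi> by (simp add: cos_ge_zero)
    qed
    show "continuous_on {z. 0 \<le> Re z} h"
      unfolding h_def using \<gamma> by (intro continuous_intros continuous_on_powr_complex) auto
    show "h field_differentiable at z" if "z \<in> {z. 0 \<le> Re z}" "z \<noteq> 0" for z
    proof -
      have "z \<notin> \<real>\<^sub>\<le>\<^sub>0"
        using that by (auto simp: complex_nonpos_Reals_iff complex_eq_iff)
      then show ?thesis
        unfolding h_def by (intro analytic_on_imp_differentiable_at[of _ "{z}"] analytic_intros) auto
    qed
    show "norm (h (of_real \<rho> * cis \<theta>)) \<le> exp (- Re b * \<rho> powr \<gamma>)"
      if "0 \<le> \<rho>" "\<theta> \<in> closed_segment 0 \<psi>" for \<rho> \<theta>
      unfolding h_def using norm_exp_neg_powr_sector_le[OF b \<gamma>] that by (simp add: \<psi>_def)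
    show "((\<lambda>R. R * exp (- Re b * R powr \<gamma>)) \<longlongrightarrow> 0) at_top"
      using b \<gamma> by real_asymp
    show "set_integrable lborel {0..} (\<lambda>\<rho>. exp (- Re b * \<rho> powr \<gamma>))"
      using b \<gamma> by (intro set_integrable_exp_neg_powr) auto
  qed
  have "(LBINT x:{0..}. exp (- (b * of_real (x powr \<gamma>)))) = (LBINT x:{0..}. h (of_real x))"
    by (rule set_lebesgue_integral_cong) (auto simp: h_real)
  also have "\<dots> = cis \<psi> * (LBINT x:{0..}. of_real (exp (- norm b * x powr \<gamma>)))"
    unfolding rotation by (subst set_lebesgue_integral_cong[where g="\<lambda>x. of_real (exp (- norm b * x powr \<gamma>))"])
      (auto simp: h_rotated)
  also have "\<dots> = cis \<psi> * of_real (LBINT x:{0..}. exp (- norm b * x powr \<gamma>))"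
    by (simp add: set_integral_complex_of_real)
  finally show ?thesis
    by (simp add: \<psi>_def)
qed

lemma Re_set_integral_exp_neg_mult_powr_pos:
  fixes b :: complex and \<gamma> :: real
  assumes b: "Re b > 0" and \<gamma>: "\<gamma> \<ge> 1"
  shows "Re (LBINT x:{0..}. exp (- (b * of_real (x powr \<gamma>)))) > 0"
proof -
  have "cos \<bar>Arg b / \<gamma>\<bar> > 0"
    using abs_Arg_div_less_pi_half[OF b \<gamma>] abs_ge_zero[of "Arg b / \<gamma>"] pi_gt_zero
    by (intro cos_gt_zero_pi) linarith+
  then have "cos (Arg b / \<gamma>) > 0"
    by (simp only: cos_abs_real)
  moreover have "(LBINT x:{0..}. exp (- norm b * x powr \<gamma>)) > 0"
    using b \<gamma> by (intro set_integral_exp_neg_powr_pos) auto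
  ultimately show ?thesis
    unfolding set_integral_exp_neg_mult_powr[OF b \<gamma>] by simp
qed

lemma cos_pi_half_mult_nonzero:
  assumes "\<not> (\<exists>k::int. \<gamma> = 2 * of_int k + 1)"
  shows "cos (pi / 2 * \<gamma>) \<noteq> 0"
proof
  assume "cos (pi / 2 * \<gamma>) = 0"
  then obtain i :: int where "odd i" "pi / 2 * \<gamma> = of_int i * (pi / 2)"
    unfolding cos_zero_iff_int by blast
  then show False
    using assms by (auto elim!: oddE)
qed

lemma alpha_pl_nonneg:
  assumes "\<omega> \<ge> 0"
  shows "alpha_pl \<alpha>0 \<gamma> \<omega> = of_real (alpha_tilde \<alpha>0 \<gamma> * \<omega> powr \<gamma>) * cis (- (pi / 2 * \<gamma>))"
proof (cases "\<omega> = 0")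
  case False
  have "(- \<i> * of_real \<omega>) powr of_real \<gamma> = (of_real \<omega> * cis (- (pi / 2))) powr of_real \<gamma>"
    by (simp add: mult.commute)
  also have "\<dots> = of_real (\<omega> powr \<gamma>) * cis (- (pi / 2 * \<gamma>))"
    using powr_of_real_mult_cis[of \<omega> "- (pi / 2)" \<gamma>] assms False pi_gt_zero by (simp add: mult.commute)
  finally show ?thesis
    by (simp add: alpha_pl_def)
qed (simp add: alpha_pl_def)

lemma alpha_pl_nonpos:
  assumes "\<omega> \<ge> 0"
  shows "alpha_pl \<alpha>0 \<gamma> (- \<omega>) = of_real (alpha_tilde \<alpha>0 \<gamma> * \<omega> powr \<gamma>) * cis (pi / 2 * \<gamma>)"
proof (cases "\<omega> = 0")
  case False
  have "(- \<i> * of_real (- \<omega>)) powr of_real \<gamma> = (of_real \<omega> * cis (pi / 2)) powr of_real \<gamma>"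
    by (simp add: mult.commute)
  also have "\<dots> = of_real (\<omega> powr \<gamma>) * cis (pi / 2 * \<gamma>)"
    using powr_of_real_mult_cis[of \<omega> "pi / 2" \<gamma>] assms False pi_gt_zero by (simp add: mult.commute)
  finally show ?thesis
    by (simp add: alpha_pl_def)
qed (simp add: alpha_pl_def)

lemma alpha_pl_uminus: "alpha_pl \<alpha>0 \<gamma> (- \<omega>) = cnj (alpha_pl \<alpha>0 \<gamma> \<omega>)"
proof (cases "\<omega> \<ge> 0")
  case True
  then show ?thesis
    by (simp add: alpha_pl_nonneg alpha_pl_nonpos cis_cnj)
next
  case False
  then show ?thesis
    using alpha_pl_nonneg[of "- \<omega>"] alpha_pl_nonpos[of "- \<omega>"] by (simp add: cis_cnj)
qed

lemma Re_alpha_pl: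
  assumes "cos (pi / 2 * \<gamma>) \<noteq> 0"
  shows "Re (alpha_pl \<alpha>0 \<gamma> \<omega>) = \<alpha>0 * \<bar>\<omega>\<bar> powr \<gamma>"
proof -
  have "Re (alpha_pl \<alpha>0 \<gamma> \<omega>) = Re (alpha_pl \<alpha>0 \<gamma> \<bar>\<omega>\<bar>)"
    using alpha_pl_uminus[of \<alpha>0 \<gamma> \<omega>] by (cases "\<omega> \<ge> 0") auto
  also have "\<dots> = \<alpha>0 * \<bar>\<omega>\<bar> powr \<gamma>"
    using assms by (simp add: alpha_pl_nonneg alpha_tilde_def)
  finally show ?thesis .
qed

lemma norm_exp_alpha_pl:
  assumes "cos (pi / 2 * \<gamma>) \<noteq> 0"
  shows "norm (exp (- alpha_pl \<alpha>0 \<gamma> \<omega> * of_real r)) = exp (- (\<alpha>0 * r) * \<bar>\<omega>\<bar> powr \<gamma>)"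
  using Re_alpha_pl[OF assms] by simp

lemma continuous_on_alpha_pl:
  assumes "\<gamma> > 0"
  shows "continuous_on A (alpha_pl \<alpha>0 \<gamma>)"
  unfolding alpha_pl_def using assms by (intro continuous_intros continuous_on_powr_complex) auto

lemma integrable_exp_alpha_pl:
  assumes "\<alpha>0 > 0" "\<gamma> > 0" "r > 0" "cos (pi / 2 * \<gamma>) \<noteq> 0"
  shows "integrable lborel (\<lambda>\<omega>. exp (- alpha_pl \<alpha>0 \<gamma> \<omega> * of_real r))"
proof (rule Bochner_Integration.integrable_bound[OF integrable_exp_neg_abs_powr[of "\<alpha>0 * r" \<gamma>]])
  show "(\<lambda>\<omega>. exp (- alpha_pl \<alpha>0 \<gamma> \<omega> * of_real r)) \<in> borel_measurable lborel"
    unfolding measurable_lborel2 using assms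
    by (intro borel_measurable_continuous_onI continuous_intros continuous_on_alpha_pl)
  show "AE \<omega> in lborel. norm (exp (- alpha_pl \<alpha>0 \<gamma> \<omega> * of_real r)) \<le> norm (exp (- (\<alpha>0 * r) * \<bar>\<omega>\<bar> powr \<gamma>))"
    unfolding norm_exp_alpha_pl[OF assms(4)] by simp
qed (use assms in auto)

lemma integrable_fourier_integrand:
  fixes f :: "real \<Rightarrow> complex"
  assumes "integrable lborel f"
  shows "integrable lborel (\<lambda>\<omega>. exp (- \<i> * of_real (\<omega> * t)) * f \<omega>)"
proof (rule Bochner_Integration.integrable_bound[OF integrable_norm[OF assms]])
  have [measurable]: "f \<in> borel_measurable borel"
    using assms by auto
  show "(\<lambda>\<omega>. exp (- \<i> * of_real (\<omega> * t)) * f \<omega>) \<in> borel_measurable lborel"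
    by measurable
qed (simp add: norm_mult)

lemma isCont_inv_fourier:
  fixes f :: "real \<Rightarrow> complex"
  assumes f: "integrable lborel f"
  shows "isCont (inv_fourier f) t"
proof (rule continuous_at_sequentiallyI)
  fix u assume u: "u \<longlonglongrightarrow> t"
  have "(\<lambda>n. LINT \<omega>|lborel. exp (- \<i> * of_real (\<omega> * u n)) * f \<omega>)
      \<longlonglongrightarrow> (LINT \<omega>|lborel. exp (- \<i> * of_real (\<omega> * t)) * f \<omega>)"
  proof (rule integral_dominated_convergence[where w="\<lambda>\<omega>. norm (f \<omega>)"])
    show "AE \<omega> in lborel. (\<lambda>n. exp (- \<i> * of_real (\<omega> * u n)) * f \<omega>)
        \<longlonglongrightarrow> exp (- \<i> * of_real (\<omega> * t)) * f \<omega>"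
      using u by (intro AE_I2 tendsto_intros)
  qed (use f integrable_fourier_integrand[OF f] in \<open>auto simp: norm_mult\<close>)
  then show "(\<lambda>n. inv_fourier f (u n)) \<longlonglongrightarrow> inv_fourier f t"
    unfolding inv_fourier_def by (intro tendsto_intros)
qed

lemma norm_exp_power_law_upper_half_plane_le:
  fixes a \<gamma> r t \<rho> \<theta> :: real
  assumes \<gamma>: "0 < \<gamma>" "\<gamma> \<le> 1" and a: "a \<ge> 0" and r: "r \<ge> 0" and t: "t \<le> 0"
    and \<rho>: "\<rho> \<ge> 0" and \<theta>: "0 \<le> \<theta>" "\<theta> \<le> pi"
  shows "norm (exp (- \<i> * (of_real \<rho> * cis \<theta> * of_real t)) *
           exp (- (of_real a * (- \<i> * (of_real \<rho> * cis \<theta>)) powr of_real \<gamma>) * of_real r))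
         \<le> exp (- (a * cos (pi / 2 * \<gamma>) * r) * \<rho> powr \<gamma>)"
proof (cases "\<rho> = 0")
  case False
  define \<phi> where "\<phi> = \<gamma> * (\<theta> - pi / 2)"
  have "- \<i> * (of_real \<rho> * cis \<theta>) = of_real \<rho> * (cis \<theta> * cis (- (pi / 2)))"
    by simp
  also have "\<dots> = of_real \<rho> * cis (\<theta> - pi / 2)"
    by (simp only: cis_mult) simp
  finally have rotate: "- \<i> * (of_real \<rho> * cis \<theta>) = of_real \<rho> * cis (\<theta> - pi / 2)" .
  have power: "(of_real \<rho> * cis (\<theta> - pi / 2)) powr of_real \<gamma> = of_real (\<rho> powr \<gamma>) * cis \<phi>"
    unfolding \<phi>_def by (rule powr_of_real_mult_cis) (use \<rho> False \<theta> pi_gt_zero in linarith)+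
  have "sin \<theta> * (\<rho> * t) \<le> 0"
    using \<rho> t sin_ge_zero[OF \<theta>] by (intro mult_nonneg_nonpos mult_nonneg_nonpos)
  then have phase: "norm (exp (- \<i> * (of_real \<rho> * cis \<theta> * of_real t))) \<le> 1"
    by (simp add: mult_ac)
  have "\<bar>\<theta> - pi / 2\<bar> \<le> pi / 2"
    unfolding abs_le_iff using \<theta> by auto
  then have "\<bar>\<phi>\<bar> \<le> pi / 2 * \<gamma>"
    using \<gamma> by (simp add: \<phi>_def abs_mult mult.commute mult_left_mono)
  moreover have "pi / 2 * \<gamma> \<le> pi"
    using \<gamma> by simp
  ultimately have "cos (pi / 2 * \<gamma>) \<le> cos \<bar>\<phi>\<bar>"
    by (intro cos_monotone_0_pi_le) auto
  then have "a * cos (pi / 2 * \<gamma>) * r * \<rho> powr \<gamma> \<le> a * cos \<phi> * r * \<rho> powr \<gamma>"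
    using a r by (simp add: mult_left_mono mult_right_mono)
  then have damping: "norm (exp (- (of_real a * (- \<i> * (of_real \<rho> * cis \<theta>)) powr of_real \<gamma>) * of_real r))
      \<le> exp (- (a * cos (pi / 2 * \<gamma>) * r) * \<rho> powr \<gamma>)"
    unfolding rotate power by (simp add: mult_ac)
  show ?thesis
    using mult_mono[OF phase damping] by (simp add: norm_mult)
qed simp

lemma inv_fourier_exp_alpha_pl_negative_time:
  assumes \<alpha>0: "\<alpha>0 > 0" and \<gamma>: "0 < \<gamma>" "\<gamma> < 1" and r: "r > 0" and t: "t < 0"
  shows "inv_fourier (\<lambda>\<omega>. exp (- alpha_pl \<alpha>0 \<gamma> \<omega> * of_real r)) t = 0"
proof -
  define a where "a = alpha_tilde \<alpha>0 \<gamma>"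
  define F where "F \<omega> = exp (- \<i> * of_real (\<omega> * t)) * exp (- alpha_pl \<alpha>0 \<gamma> \<omega> * of_real r)" for \<omega>
  define h where "h z = exp (- \<i> * (z * of_real t)) * exp (- (of_real a * (- \<i> * z) powr of_real \<gamma>) * of_real r)"
    for z
  have "0 < pi / 2 * \<gamma>" "pi / 2 * \<gamma> < pi / 2"
    using \<gamma> by simp_all
  then have "cos (pi / 2 * \<gamma>) > 0"
    by (intro cos_gt_zero_pi) linarith+
  then have a_cos: "a * cos (pi / 2 * \<gamma>) = \<alpha>0" and a: "a > 0"
    using \<alpha>0 by (simp_all add: a_def alpha_tilde_def)
  have h_real: "h (of_real \<omega>) = F \<omega>" for \<omega>
    by (simp add: h_def F_def alpha_pl_def a_def)
  have F: "integrable lborel F"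
    unfolding F_def using \<open>cos (pi / 2 * \<gamma>) > 0\<close>
    by (intro integrable_fourier_integrand integrable_exp_alpha_pl[OF \<alpha>0 \<gamma>(1) r]) simp
  have "(LBINT \<rho>:{0..}. h (of_real \<rho>)) = cis pi * (LBINT \<rho>:{0..}. h (of_real \<rho> * cis pi))"
  proof (rule set_integral_half_line_rotation[where S="{z. Im z \<ge> 0}" and B="\<lambda>\<rho>. exp (- (\<alpha>0 * r) * \<rho> powr \<gamma>)"])
    show "convex {z. Im z \<ge> 0}"
      by (rule convex_halfspace_Im_ge)
    show "of_real \<rho> * cis \<theta> \<in> {z. 0 \<le> Im z}" if "0 \<le> \<rho>" "\<theta> \<in> closed_segment 0 pi" for \<rho> \<theta>
      using that by (auto simp: closed_segment_eq_real_ivl intro!: mult_nonneg_nonneg sin_ge_zero)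
    show "continuous_on {z. 0 \<le> Im z} h"
      unfolding h_def using \<gamma> by (intro continuous_intros continuous_on_powr_complex) auto
    show "h field_differentiable at z" if "z \<in> {z. 0 \<le> Im z}" "z \<noteq> 0" for z
    proof -
      have "- \<i> * z \<notin> \<real>\<^sub>\<le>\<^sub>0"
        using that by (auto simp: complex_nonpos_Reals_iff complex_eq_iff)
      then show ?thesis
        unfolding h_def by (intro analytic_on_imp_differentiable_at[of _ "{z}"] analytic_intros) auto
    qed
    show "norm (h (of_real \<rho> * cis \<theta>)) \<le> exp (- (\<alpha>0 * r) * \<rho> powr \<gamma>)"
      if "0 \<le> \<rho>" "\<theta> \<in> closed_segment 0 pi" for \<rho> \<theta>
      using norm_exp_power_law_upper_half_plane_le[of \<gamma> a r t \<rho> \<theta>] that assms a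
      unfolding h_def a_cos by (auto simp: closed_segment_eq_real_ivl)
    show "((\<lambda>R. R * exp (- (\<alpha>0 * r) * R powr \<gamma>)) \<longlongrightarrow> 0) at_top"
      using \<alpha>0 r \<gamma> by real_asymp
    show "set_integrable lborel {0..} (\<lambda>\<rho>. exp (- (\<alpha>0 * r) * \<rho> powr \<gamma>))"
      using \<alpha>0 r \<gamma> by (intro set_integrable_exp_neg_powr) auto
  qed
  then have "(LBINT x:{0..}. F x) = - (LBINT x:{0..}. F (- x))"
    by (simp add: h_real flip: of_real_minus)
  then show ?thesis
    using lborel_integral_split_at_0[OF F] unfolding inv_fourier_def F_def by simp
qed

lemma integral_exp_alpha_pl_nonzero:
  assumes \<alpha>0: "\<alpha>0 > 0" and \<gamma>: "\<gamma> > 1" and cos: "cos (pi / 2 * \<gamma>) \<noteq> 0" and r: "r > 0"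
  shows "(LINT \<omega>|lborel. exp (- alpha_pl \<alpha>0 \<gamma> \<omega> * of_real r)) \<noteq> 0"
proof -
  define f where "f = (\<lambda>\<omega>. exp (- alpha_pl \<alpha>0 \<gamma> \<omega> * of_real r))"
  define b where "b = of_real (alpha_tilde \<alpha>0 \<gamma> * r) * cis (- (pi / 2 * \<gamma>))"
  have f_half_line: "f x = exp (- (b * of_real (x powr \<gamma>)))" if "x \<ge> 0" for x
    using that by (simp add: f_def b_def alpha_pl_nonneg mult_ac)
  have "Re b = \<alpha>0 * r"
    using cos by (simp add: b_def alpha_tilde_def)
  then have "Re (LBINT x:{0..}. exp (- (b * of_real (x powr \<gamma>)))) > 0"
    using \<alpha>0 r \<gamma> by (intro Re_set_integral_exp_neg_mult_powr_pos) auto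
  also have "(LBINT x:{0..}. exp (- (b * of_real (x powr \<gamma>)))) = (LBINT x:{0..}. f x)"
    by (rule set_lebesgue_integral_cong) (auto simp: f_half_line)
  finally have "Re (LBINT x:{0..}. f x) > 0" .
  moreover have "integral\<^sup>L lborel f = (LBINT x:{0..}. f x) + cnj (LBINT x:{0..}. f x)"
  proof -
    have f_uminus: "f (- x) = cnj (f x)" for x
      by (simp add: f_def alpha_pl_uminus exp_cnj)
    have "(LBINT x:{0..}. f (- x)) = cnj (LBINT x:{0..}. f x)"
      unfolding set_lebesgue_integral_def f_uminus complex_cnj_scaleR[symmetric]
      by (rule Bochner_Integration.integral_cnj)
    then show ?thesis
      using lborel_integral_split_at_0[OF integrable_exp_alpha_pl[OF \<alpha>0 _ r cos]] \<gamma>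
      by (simp add: f_def)
  qed
  ultimately show ?thesis
    unfolding f_def by (auto simp: complex_add_cnj)
qed

lemma inv_fourier_exp_alpha_pl_not_causal:
  assumes \<alpha>0: "\<alpha>0 > 0" and \<gamma>: "\<gamma> > 1" and cos: "cos (pi / 2 * \<gamma>) \<noteq> 0" and r: "r > 0"
  shows "\<exists>t<0. inv_fourier (\<lambda>\<omega>. exp (- alpha_pl \<alpha>0 \<gamma> \<omega> * of_real r)) t \<noteq> 0"
proof (rule ccontr)
  let ?K = "inv_fourier (\<lambda>\<omega>. exp (- alpha_pl \<alpha>0 \<gamma> \<omega> * of_real r))"
  assume causal: "\<not> (\<exists>t<0. ?K t \<noteq> 0)"
  have "isCont ?K 0"
    using \<gamma> by (intro isCont_inv_fourier integrable_exp_alpha_pl[OF \<alpha>0 _ r cos]) simp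
  then have "(?K \<longlongrightarrow> ?K 0) (at_left 0)"
    unfolding isCont_def by (rule tendsto_mono[OF at_le[OF subset_UNIV]])
  moreover have "\<forall>\<^sub>F t in at_left 0. t \<in> {- 1<..<0::real}"
    by (rule eventually_at_left_real) simp
  then have "\<forall>\<^sub>F t in at_left 0. ?K t = 0"
    by eventually_elim (use causal in auto)
  then have "(?K \<longlongrightarrow> 0) (at_left 0)"
    by (rule tendsto_eventually)
  ultimately have "?K 0 = 0"
    by (rule tendsto_unique[OF trivial_limit_at_left_real])
  then show False
    using integral_exp_alpha_pl_nonzero[OF assms] by (simp add: inv_fourier_def)
qed

theorem theorem2:
  fixes c0 \<alpha>0 \<gamma> :: real
  assumes "c0 > 0" and "\<alpha>0 > 0" and "\<gamma> > 0"
    and "\<not> (\<exists>k::int. \<gamma> = 2 * of_int k + 1)"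
  shows "(\<forall>x::real^3. x \<noteq> 0 \<longrightarrow> (\<forall>t::real. t < 0 \<longrightarrow> kernel_K \<alpha>0 \<gamma> x t = 0))
           \<longleftrightarrow> \<gamma> \<in> {0<..<1}"
  \<comment> \<open>The sound speed c0 does not enter the kernel.\<close>
proof
  assume causal: "\<forall>x::real^3. x \<noteq> 0 \<longrightarrow> (\<forall>t::real. t < 0 \<longrightarrow> kernel_K \<alpha>0 \<gamma> x t = 0)"
  show "\<gamma> \<in> {0<..<1}"
  proof (rule ccontr)
    assume "\<gamma> \<notin> {0<..<1}"
    moreover have "\<gamma> \<noteq> 1"
      using assms(4)[unfolded not_ex, rule_format, of 0] by simp
    ultimately have "\<gamma> > 1"
      using assms(3) by auto
    then obtain t where "t < 0" and "inv_fourier (\<lambda>\<omega>. exp (- alpha_pl \<alpha>0 \<gamma> \<omega> * of_real 1)) t \<noteq> 0"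
      using inv_fourier_exp_alpha_pl_not_causal[OF assms(2) _ cos_pi_half_mult_nonzero[OF assms(4)], of 1] by auto
    then show False
      using causal[rule_format, of "axis 1 1" t] by (simp add: kernel_K_def)
  qed
next
  assume "\<gamma> \<in> {0<..<1}"
  then show "\<forall>x::real^3. x \<noteq> 0 \<longrightarrow> (\<forall>t::real. t < 0 \<longrightarrow> kernel_K \<alpha>0 \<gamma> x t = 0)"
    using inv_fourier_exp_alpha_pl_negative_time[OF assms(2)] by (simp add: kernel_K_def)
qed

end
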